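(* Let $Q$ be a symmetric Leibniz algebra, $L$ a dense subalgebra of $Q$, and suppose $Q$ is a multiplicatively semiprime algebra of quotients of $L$. Then for every essential ideal $I$ of $L$, $\mathrm{lan}_{\mathscr{A}(Q)}(\tilde{I})=\{0\}$.
   Context: A symmetric Leibniz algebra satisfies both $[x,[y,z]]=[[x,y],z]-[[x,z],y]$ and $[x,[y,z]]=[[x,y],z]+[y,[x,z]]$. For $x\in Q$, $R_x(u)=[u,x]$, $L_x(u)=[x,u]$. $\mathscr{A}(Q)$ is the associative subalgebra of $\mathrm{End}(Q)$ generated by all $R_x,L_x$; for $X\subseteq Q$, $\mathscr{A}_Q(X)$ is the subalgebra of $\mathscr{A}(Q)$ generated by $R_x,L_x$, $x\in X$. For an ideal $I$ of $L$, $\tilde I$ is the two-sided ideal of $\mathscr{A}_Q(L)$ generated by $\mathscr{A}_Q(I)$, and $\mathrm{lan}_{\mathscr{A}(Q)}(\tilde I)=\{\mu\in\mathscr{A}(Q):\mu\nu=0\ \forall\nu\in\tilde I\}$. $M(Q)$ is the associative algebra generated by the identity and all $R_x,L_x$; $L$ is dense in $Q$ if the only $\mu\in M(Q)$ with $\mu(L)=\{0\}$ is $0$. $Q$ is multiplicatively semiprime if $Q$ is semiprime ($[J,J]\ne0$ for nonzero ideals $J$) and $M(Q)$ is semiprime (no nonzero ideal of zero square). An ideal of $L$ is essential if it meets every nonzero ideal nontrivially. With ${}_L(q)=\mathbb{F}q+\{\sum\xi_i(q):\xi_i\in\mathscr{A}_Q(L)\}$ and $(L:q)=\{x\in L:[x,{}_L(q)]\subseteq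 L,[{}_L(q),x]\subseteq L\}$, $Q$ is an algebra of quotients of $L$ if for all $p,q\in Q$, $p\ne0$, there is $x\in(L:q)$ with $[x,p]\ne0$ or $y\in(L:q)$ with $[p,y]\ne0$. *)

theory Defs
  imports Complex_Main
begin

text \<open>The algebra Q is the whole type 'a, a vector space over the field 'k with
  scalar multiplication sc and bilinear product br.\<close>

definition bilinear_prod :: "('k::field \<Rightarrow> 'a::ab_group_add \<Rightarrow> 'a) \<Rightarrow> ('a \<Rightarrow> 'a \<Rightarrow> 'a) \<Rightarrow> bool" where
  "bilinear_prod sc br \<longleftrightarrow> vector_space sc \<and>
     (\<forall>x. Vector_Spaces.linear sc sc (br x)) \<and> (\<forall>x. Vector_Spaces.linear sc sc (\<lambda>u. br u x))"

definition symmetric_leibniz :: "('k::field \<Rightarrow> 'a::ab_group_add \<Rightarrow> 'a) \<Rightarrow> ('a \<Rightarrow> 'a \<Rightarrow> 'a) \<Rightarrow> bool" where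
  "symmetric_leibniz sc br \<longleftrightarrow> bilinear_prod sc br \<and>
     (\<forall>x y z. br x (br y z) = br (br x y) z - br (br x z) y) \<and>
     (\<forall>x y z. br x (br y z) = br (br x y) z + br y (br x z))"

definition Rop :: "('a \<Rightarrow> 'a \<Rightarrow> 'a) \<Rightarrow> 'a \<Rightarrow> 'a \<Rightarrow> 'a" where
  "Rop br x = (\<lambda>u. br u x)"

definition Lop :: "('a \<Rightarrow> 'a \<Rightarrow> 'a) \<Rightarrow> 'a \<Rightarrow> 'a \<Rightarrow> 'a" where
  "Lop br x = (\<lambda>u. br x u)"

definition lin_subspace :: "('k::field \<Rightarrow> 'a::ab_group_add \<Rightarrow> 'a) \<Rightarrow> 'a set \<Rightarrow> bool" where
  "lin_subspace sc S \<longleftrightarrow> 0 \<in> S \<and> (\<forall>x\<in>S. \<forall>y\<in>S. x + y \<in> S) \<and> (\<forall>c. \<forall>x\<in>S. sc c x \<in> S)"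

inductive_set gen_alg :: "('k::field \<Rightarrow> 'a::ab_group_add \<Rightarrow> 'a) \<Rightarrow> ('a \<Rightarrow> 'a) set \<Rightarrow> ('a \<Rightarrow> 'a) set"
  for sc :: "'k::field \<Rightarrow> 'a::ab_group_add \<Rightarrow> 'a" and S :: "('a \<Rightarrow> 'a) set" where
  gen: "f \<in> S \<Longrightarrow> f \<in> gen_alg sc S"
| zero: "(\<lambda>_. 0) \<in> gen_alg sc S"
| add: "f \<in> gen_alg sc S \<Longrightarrow> g \<in> gen_alg sc S \<Longrightarrow> (\<lambda>u. f u + g u) \<in> gen_alg sc S"
| smul: "f \<in> gen_alg sc S \<Longrightarrow> (\<lambda>u. sc c (f u)) \<in> gen_alg sc S"
| comp: "f \<in> gen_alg sc S \<Longrightarrow> g \<in> gen_alg sc S \<Longrightarrow> f \<circ> g \<in> gen_alg sc S"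

text \<open>\<A>_Q(X): generated by R_x, L_x for x in X; \<A>(Q) = \<A>_Q(UNIV).\<close>
definition AQ :: "('k::field \<Rightarrow> 'a::ab_group_add \<Rightarrow> 'a) \<Rightarrow> ('a \<Rightarrow> 'a \<Rightarrow> 'a) \<Rightarrow> 'a set \<Rightarrow> ('a \<Rightarrow> 'a) set" where
  "AQ sc br X = gen_alg sc ({Rop br x | x. x \<in> X} \<union> {Lop br x | x. x \<in> X})"

definition MQ :: "('k::field \<Rightarrow> 'a::ab_group_add \<Rightarrow> 'a) \<Rightarrow> ('a \<Rightarrow> 'a \<Rightarrow> 'a) \<Rightarrow> ('a \<Rightarrow> 'a) set" where
  "MQ sc br = gen_alg sc (insert id ({Rop br x | x. True} \<union> {Lop br x | x. True}))"

inductive_set gen_ideal :: "('k::field \<Rightarrow> 'a::ab_group_add \<Rightarrow> 'a) \<Rightarrow> ('a \<Rightarrow> 'a) set \<Rightarrow> ('a \<Rightarrow> 'a) set \<Rightarrow> ('a \<Rightarrow> 'a) set"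
  for sc :: "'k::field \<Rightarrow> 'a::ab_group_add \<Rightarrow> 'a" and A :: "('a \<Rightarrow> 'a) set" and S :: "('a \<Rightarrow> 'a) set" where
  gen: "f \<in> S \<Longrightarrow> f \<in> gen_ideal sc A S"
| zero: "(\<lambda>_. 0) \<in> gen_ideal sc A S"
| add: "f \<in> gen_ideal sc A S \<Longrightarrow> g \<in> gen_ideal sc A S \<Longrightarrow> (\<lambda>u. f u + g u) \<in> gen_ideal sc A S"
| smul: "f \<in> gen_ideal sc A S \<Longrightarrow> (\<lambda>u. sc c (f u)) \<in> gen_ideal sc A S"
| lmul: "m \<in> A \<Longrightarrow> f \<in> gen_ideal sc A S \<Longrightarrow> m \<circ> f \<in> gen_ideal sc A S"
| rmul: "m \<in> A \<Longrightarrow> f \<in> gen_ideal sc A S \<Longrightarrow> f \<circ> m \<in> gen_ideal sc A S"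

definition tilde_ideal :: "('k::field \<Rightarrow> 'a::ab_group_add \<Rightarrow> 'a) \<Rightarrow> ('a \<Rightarrow> 'a \<Rightarrow> 'a) \<Rightarrow> 'a set \<Rightarrow> 'a set \<Rightarrow> ('a \<Rightarrow> 'a) set" where
  "tilde_ideal sc br L I = gen_ideal sc (AQ sc br L) (AQ sc br I)"

definition lan :: "('a \<Rightarrow> 'a::zero) set \<Rightarrow> ('a \<Rightarrow> 'a) set \<Rightarrow> ('a \<Rightarrow> 'a) set" where
  "lan A T = {\<mu> \<in> A. \<forall>\<nu>\<in>T. \<mu> \<circ> \<nu> = (\<lambda>_. 0)}"

definition subalg :: "('k::field \<Rightarrow> 'a::ab_group_add \<Rightarrow> 'a) \<Rightarrow> ('a \<Rightarrow> 'a \<Rightarrow> 'a) \<Rightarrow> 'a set \<Rightarrow> bool" where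
  "subalg sc br L \<longleftrightarrow> lin_subspace sc L \<and> (\<forall>x\<in>L. \<forall>y\<in>L. br x y \<in> L)"

definition ideal_of :: "('k::field \<Rightarrow> 'a::ab_group_add \<Rightarrow> 'a) \<Rightarrow> ('a \<Rightarrow> 'a \<Rightarrow> 'a) \<Rightarrow> 'a set \<Rightarrow> 'a set \<Rightarrow> bool" where
  "ideal_of sc br L I \<longleftrightarrow> lin_subspace sc I \<and> I \<subseteq> L \<and>
     (\<forall>x\<in>I. \<forall>y\<in>L. br x y \<in> I \<and> br y x \<in> I)"

definition essential_ideal :: "('k::field \<Rightarrow> 'a::ab_group_add \<Rightarrow> 'a) \<Rightarrow> ('a \<Rightarrow> 'a \<Rightarrow> 'a) \<Rightarrow> 'a set \<Rightarrow> 'a set \<Rightarrow> bool" where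
  "essential_ideal sc br L I \<longleftrightarrow> ideal_of sc br L I \<and>
     (\<forall>J. ideal_of sc br L J \<and> J \<noteq> {0} \<longrightarrow> I \<inter> J \<noteq> {0})"

definition dense_in :: "('k::field \<Rightarrow> 'a::ab_group_add \<Rightarrow> 'a) \<Rightarrow> ('a \<Rightarrow> 'a \<Rightarrow> 'a) \<Rightarrow> 'a set \<Rightarrow> bool" where
  "dense_in sc br L \<longleftrightarrow> (\<forall>\<mu>\<in>MQ sc br. (\<forall>x\<in>L. \<mu> x = 0) \<longrightarrow> \<mu> = (\<lambda>_. 0))"

definition semiprime_alg :: "('k::field \<Rightarrow> 'a::ab_group_add \<Rightarrow> 'a) \<Rightarrow> ('a \<Rightarrow> 'a \<Rightarrow> 'a) \<Rightarrow> bool" where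
  "semiprime_alg sc br \<longleftrightarrow>
     (\<forall>J. ideal_of sc br UNIV J \<and> J \<noteq> {0} \<longrightarrow> (\<exists>a\<in>J. \<exists>b\<in>J. br a b \<noteq> 0))"

definition semiprime_MQ :: "('k::field \<Rightarrow> 'a::ab_group_add \<Rightarrow> 'a) \<Rightarrow> ('a \<Rightarrow> 'a \<Rightarrow> 'a) \<Rightarrow> bool" where
  "semiprime_MQ sc br \<longleftrightarrow>
     (\<forall>J. J \<subseteq> MQ sc br \<and> (\<lambda>_. 0) \<in> J \<and>
          (\<forall>f\<in>J. \<forall>g\<in>J. (\<lambda>u. f u + g u) \<in> J) \<and> (\<forall>c. \<forall>f\<in>J. (\<lambda>u. sc c (f u)) \<in> J) \<and>
          (\<forall>m\<in>MQ sc br. \<forall>f\<in>J. m \<circ> f \<in> J \<and> f \<circ> m \<in> J) \<and>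
          (\<forall>f\<in>J. \<forall>g\<in>J. f \<circ> g = (\<lambda>_. 0))
        \<longrightarrow> J = {\<lambda>_. 0})"

definition mult_semiprime :: "('k::field \<Rightarrow> 'a::ab_group_add \<Rightarrow> 'a) \<Rightarrow> ('a \<Rightarrow> 'a \<Rightarrow> 'a) \<Rightarrow> bool" where
  "mult_semiprime sc br \<longleftrightarrow> semiprime_alg sc br \<and> semiprime_MQ sc br"

definition gen_sub :: "('k::field \<Rightarrow> 'a::ab_group_add \<Rightarrow> 'a) \<Rightarrow> ('a \<Rightarrow> 'a \<Rightarrow> 'a) \<Rightarrow> 'a set \<Rightarrow> 'a \<Rightarrow> 'a set" where
  "gen_sub sc br L q = {sc c q + (\<Sum>\<xi>\<leftarrow>xs. \<xi> q) | c xs. set xs \<subseteq> AQ sc br L}"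

definition colon :: "('k::field \<Rightarrow> 'a::ab_group_add \<Rightarrow> 'a) \<Rightarrow> ('a \<Rightarrow> 'a \<Rightarrow> 'a) \<Rightarrow> 'a set \<Rightarrow> 'a \<Rightarrow> 'a set" where
  "colon sc br L q = {x \<in> L. \<forall>u\<in>gen_sub sc br L q. br x u \<in> L \<and> br u x \<in> L}"

definition algebra_of_quotients :: "('k::field \<Rightarrow> 'a::ab_group_add \<Rightarrow> 'a) \<Rightarrow> ('a \<Rightarrow> 'a \<Rightarrow> 'a) \<Rightarrow> 'a set \<Rightarrow> bool" where
  "algebra_of_quotients sc br L \<longleftrightarrow> subalg sc br L \<and>
     (\<forall>p q. p \<noteq> 0 \<longrightarrow> (\<exists>x\<in>colon sc br L q. br x p \<noteq> 0) \<or> (\<exists>y\<in>colon sc br L q. br p y \<noteq> 0))"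

end

(*
  Let \<Lambda> be the left annihilator of \<tilde>I in all of M(Q) and W the set of w with
  \<mu>(wQ) = \<mu>(Qw) = 0 for every \<mu> \<in> \<Lambda>. Then I \<subseteq> W, and the Leibniz identities together
  with density of L make W an ideal of Q. The maps of M(Q) killing WQ + QW form an ideal K
  of M(Q); the part of K annihilated by K from the left has zero square, so it vanishes
  because M(Q) is semiprime. For \<mu> \<in> \<Lambda> and w \<in> W, both L_w \<mu> and R_w \<mu> lie in that part,
  so \<mu>(Q) lies in the annihilator of W. This annihilator is an ideal of Q meeting W, hence I,
  only in 0 (Q is semiprime); so its trace on L is 0 (I is essential), and it is 0 because Q
  is an algebra of quotients of L. Hence \<mu> = 0.
*)

theory Submission
  imports Defs
begin

definition annihilator :: "('a \<Rightarrow> 'a \<Rightarrow> 'a) \<Rightarrow> 'a set \<Rightarrow> 'a::zero set" where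
  "annihilator br W = {z. \<forall>w\<in>W. br z w = 0 \<and> br w z = 0}"

definition kills_products :: "('a \<Rightarrow> 'a \<Rightarrow> 'a) \<Rightarrow> ('a \<Rightarrow> 'a::zero) \<Rightarrow> 'a \<Rightarrow> bool" where
  "kills_products br m w \<longleftrightarrow> (\<forall>u. m (br w u) = 0 \<and> m (br u w) = 0)"

definition product_kernel :: "('a \<Rightarrow> 'a \<Rightarrow> 'a) \<Rightarrow> ('a \<Rightarrow> 'a::zero) set \<Rightarrow> 'a set" where
  "product_kernel br \<Lambda> = {w. \<forall>m\<in>\<Lambda>. kills_products br m w}"

definition MQ_ideal :: "('k::field \<Rightarrow> 'a::ab_group_add \<Rightarrow> 'a) \<Rightarrow> ('a \<Rightarrow> 'a \<Rightarrow> 'a) \<Rightarrow> ('a \<Rightarrow> 'a) set \<Rightarrow> bool" where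
  "MQ_ideal sc br J \<longleftrightarrow> J \<subseteq> MQ sc br \<and> (\<lambda>_. 0) \<in> J \<and>
     (\<forall>f\<in>J. \<forall>g\<in>J. (\<lambda>u. f u + g u) \<in> J) \<and> (\<forall>c. \<forall>f\<in>J. (\<lambda>u. sc c (f u)) \<in> J) \<and>
     (\<forall>m\<in>MQ sc br. \<forall>f\<in>J. m \<circ> f \<in> J \<and> f \<circ> m \<in> J)"

lemma MQ_idealI:
  assumes "J \<subseteq> MQ sc br" "(\<lambda>_. 0) \<in> J" "\<And>f g. f \<in> J \<Longrightarrow> g \<in> J \<Longrightarrow> (\<lambda>u. f u + g u) \<in> J"
    "\<And>c f. f \<in> J \<Longrightarrow> (\<lambda>u. sc c (f u)) \<in> J"
    "\<And>m f. m \<in> MQ sc br \<Longrightarrow> f \<in> J \<Longrightarrow> m \<circ> f \<in> J \<and> f \<circ> m \<in> J"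
  shows "MQ_ideal sc br J"
  using assms unfolding MQ_ideal_def by simp

lemma MQ_idealD:
  assumes "MQ_ideal sc br J"
  shows "J \<subseteq> MQ sc br" "(\<lambda>_. 0) \<in> J" "\<And>f g. f \<in> J \<Longrightarrow> g \<in> J \<Longrightarrow> (\<lambda>u. f u + g u) \<in> J"
    "\<And>c f. f \<in> J \<Longrightarrow> (\<lambda>u. sc c (f u)) \<in> J"
    "\<And>m f. m \<in> MQ sc br \<Longrightarrow> f \<in> J \<Longrightarrow> m \<circ> f \<in> J \<and> f \<circ> m \<in> J"
  using assms unfolding MQ_ideal_def by simp_all

lemma semiprime_MQD:
  assumes "semiprime_MQ sc br" "MQ_ideal sc br J" "\<And>f g. f \<in> J \<Longrightarrow> g \<in> J \<Longrightarrow> f \<circ> g = (\<lambda>_. 0)"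
  shows "J = {\<lambda>_. 0}"
proof -
  have "MQ_ideal sc br J \<and> (\<forall>f\<in>J. \<forall>g\<in>J. f \<circ> g = (\<lambda>_. 0)) \<longrightarrow> J = {\<lambda>_. 0}"
    using assms(1) unfolding semiprime_MQ_def MQ_ideal_def conj_assoc by (rule spec)
  then show ?thesis
    using assms(2,3) by blast
qed

lemma ideal_of_Int: "ideal_of sc br L I \<Longrightarrow> ideal_of sc br L J \<Longrightarrow> ideal_of sc br L (I \<inter> J)"
  unfolding ideal_of_def lin_subspace_def by auto

lemma ideal_of_Int_subalg:
  "subalg sc br L \<Longrightarrow> ideal_of sc br UNIV K \<Longrightarrow> ideal_of sc br L (K \<inter> L)"
  unfolding subalg_def ideal_of_def lin_subspace_def by auto

lemma Lop_MQ: "Lop br x \<in> MQ sc br"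
  unfolding MQ_def by (rule gen_alg.gen) blast

lemma Rop_MQ: "Rop br x \<in> MQ sc br"
  unfolding MQ_def by (rule gen_alg.gen) blast

lemma comp_MQ: "f \<in> MQ sc br \<Longrightarrow> g \<in> MQ sc br \<Longrightarrow> f \<circ> g \<in> MQ sc br"
  unfolding MQ_def by (rule gen_alg.comp)

lemma zero_MQ: "(\<lambda>_. 0) \<in> MQ sc br"
  unfolding MQ_def by (rule gen_alg.zero)

lemma add_MQ: "f \<in> MQ sc br \<Longrightarrow> g \<in> MQ sc br \<Longrightarrow> (\<lambda>u. f u + g u) \<in> MQ sc br"
  unfolding MQ_def by (rule gen_alg.add)

lemma scale_MQ: "f \<in> MQ sc br \<Longrightarrow> (\<lambda>u. sc c (f u)) \<in> MQ sc br"
  unfolding MQ_def by (rule gen_alg.smul)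

lemma MQ_induct[consumes 1, case_names id Rop Lop zero add scale comp]:
  assumes "f \<in> MQ sc br"
    and "P id" "\<And>x. P (Rop br x)" "\<And>x. P (Lop br x)" "P (\<lambda>_. 0)"
    and "\<And>f g. f \<in> MQ sc br \<Longrightarrow> g \<in> MQ sc br \<Longrightarrow> P f \<Longrightarrow> P g \<Longrightarrow> P (\<lambda>u. f u + g u)"
    and "\<And>f c. f \<in> MQ sc br \<Longrightarrow> P f \<Longrightarrow> P (\<lambda>u. sc c (f u))"
    and "\<And>f g. f \<in> MQ sc br \<Longrightarrow> g \<in> MQ sc br \<Longrightarrow> P f \<Longrightarrow> P g \<Longrightarrow> P (f \<circ> g)"
  shows "P f"
  using assms(1) unfolding MQ_def
proof (induction rule: gen_alg.induct)
  case (gen f)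
  then show ?case using assms(2-4) by blast
next
  case zero
  show ?case by (rule assms(5))
next
  case (add f g)
  then show ?case using assms(6) unfolding MQ_def by blast
next
  case (smul f c)
  then show ?case using assms(7) unfolding MQ_def by blast
next
  case (comp f g)
  then show ?case using assms(8) unfolding MQ_def by blast
qed

lemma Lop_AQ: "x \<in> X \<Longrightarrow> Lop br x \<in> AQ sc br X"
  unfolding AQ_def by (rule gen_alg.gen) blast

lemma Rop_AQ: "x \<in> X \<Longrightarrow> Rop br x \<in> AQ sc br X"
  unfolding AQ_def by (rule gen_alg.gen) blast

lemma AQ_subset_MQ: "AQ sc br X \<subseteq> MQ sc br"
proof
  fix f assume "f \<in> AQ sc br X"
  then show "f \<in> MQ sc br"
    unfolding AQ_def MQ_def
  proof (induction rule: gen_alg.induct)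
    case (gen f)
    then show ?case by (intro gen_alg.gen) blast
  next
    case (comp f g)
    then show ?case by (intro gen_alg.comp)
  qed (rule gen_alg.intros; assumption)+
qed

locale symmetric_leibniz_algebra =
  fixes sc :: "'k::field \<Rightarrow> 'a::ab_group_add \<Rightarrow> 'a" and br :: "'a \<Rightarrow> 'a \<Rightarrow> 'a"
  assumes symmetric_leibniz: "symmetric_leibniz sc br"
begin

sublocale vector_space_pair sc sc
  using symmetric_leibniz
  unfolding symmetric_leibniz_def bilinear_prod_def vector_space_pair_def by blast

lemma linear_br_left: "Vector_Spaces.linear sc sc (br x)"
  using symmetric_leibniz unfolding symmetric_leibniz_def bilinear_prod_def by blast

lemma linear_br_right: "Vector_Spaces.linear sc sc (\<lambda>u. br u x)"
  using symmetric_leibniz unfolding symmetric_leibniz_def bilinear_prod_def by blast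

lemma br_add_left: "br (a + b) x = br a x + br b x"
  by (rule linear_add[OF linear_br_right])

lemma br_add_right: "br x (a + b) = br x a + br x b"
  by (rule linear_add[OF linear_br_left])

lemma br_scale_left: "br (sc c a) x = sc c (br a x)"
  by (rule linear_scale[OF linear_br_right])

lemma br_scale_right: "br x (sc c a) = sc c (br x a)"
  by (rule linear_scale[OF linear_br_left])

lemma br_zero_left: "br 0 x = 0"
  by (rule linear_0[OF linear_br_right])

lemma br_zero_right: "br x 0 = 0"
  by (rule linear_0[OF linear_br_left])

lemma br_right_leibniz: "br (br x y) z = br (br x z) y + br x (br y z)"
  using symmetric_leibniz unfolding symmetric_leibniz_def by (metis add.commute eq_diff_eq)

lemma br_left_leibniz: "br x (br y z) = br (br x y) z + br y (br x z)"
  using symmetric_leibniz unfolding symmetric_leibniz_def by blast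

lemma linear_MQ: "f \<in> MQ sc br \<Longrightarrow> Vector_Spaces.linear sc sc f"
proof (induction rule: MQ_induct)
  case id
  show ?case by (rule vs1.linear_id)
next
  case (Rop x)
  show ?case unfolding Rop_def by (rule linear_br_right)
next
  case (Lop x)
  show ?case unfolding Lop_def by (rule linear_br_left)
next
  case zero
  show ?case by (rule linear_zero)
next
  case (add f g)
  then show ?case by (intro linear_compose_add)
next
  case (scale f c)
  then show ?case by (intro linear_compose_scale_right)
next
  case (comp f g)
  then show ?case by (intro Vector_Spaces.linear_compose)
qed

lemma ideal_annihilator:
  assumes "ideal_of sc br UNIV W"
  shows "ideal_of sc br UNIV (annihilator br W)"
proof -
  have W: "br w q \<in> W" "br q w \<in> W" if "w \<in> W" for w q
    using assms that unfolding ideal_of_def by blast+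
  have "br z q \<in> annihilator br W \<and> br q z \<in> annihilator br W"
    if "z \<in> annihilator br W" for z q
  proof -
    have z: "br z w = 0" "br w z = 0" if "w \<in> W" for w
      using that \<open>z \<in> annihilator br W\<close> unfolding annihilator_def by blast+
    have "br (br z q) w = 0 \<and> br w (br z q) = 0 \<and> br (br q z) w = 0 \<and> br w (br q z) = 0"
      if "w \<in> W" for w
      using z W that br_right_leibniz[of z q w] br_left_leibniz[of w z q]
        br_right_leibniz[of q z w] br_left_leibniz[of w q z]
      by (simp add: br_zero_left br_zero_right)
    then show ?thesis unfolding annihilator_def by blast
  qed
  then show ?thesis
    unfolding ideal_of_def lin_subspace_def annihilator_def
    by (auto simp: br_zero_left br_zero_right br_add_left br_add_right br_scale_left br_scale_right)
qed

lemma annihilator_Int_self: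
  assumes "semiprime_alg sc br" "ideal_of sc br UNIV W"
  shows "annihilator br W \<inter> W = {0}"
proof (rule ccontr)
  assume "annihilator br W \<inter> W \<noteq> {0}"
  moreover have "ideal_of sc br UNIV (annihilator br W \<inter> W)"
    using assms(2) by (intro ideal_of_Int ideal_annihilator)
  ultimately obtain a b where "a \<in> annihilator br W \<inter> W" "b \<in> annihilator br W \<inter> W" "br a b \<noteq> 0"
    using assms(1) unfolding semiprime_alg_def by blast
  then show False unfolding annihilator_def by blast
qed

lemma algebra_of_quotients_ideal_eq_zero:
  assumes "algebra_of_quotients sc br L" "ideal_of sc br UNIV K" "K \<inter> L = {0}"
  shows "K = {0}"
proof -
  have "z = 0" if "z \<in> K" for z
  proof (rule ccontr)
    assume "z \<noteq> 0"
    have "z \<in> gen_sub sc br L z"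
      unfolding gen_sub_def by (rule CollectI, rule exI[of _ 1], rule exI[of _ "[]"]) simp
    then have "br x z \<in> L \<and> br z x \<in> L" if "x \<in> colon sc br L z" for x
      using that unfolding colon_def by blast
    moreover have "br x z \<in> K \<and> br z x \<in> K" for x
      using assms(2) \<open>z \<in> K\<close> unfolding ideal_of_def by blast
    moreover obtain x where "x \<in> colon sc br L z" "br x z \<noteq> 0 \<or> br z x \<noteq> 0"
      using assms(1) \<open>z \<noteq> 0\<close> unfolding algebra_of_quotients_def by blast
    ultimately show False using assms(3) by blast
  qed
  moreover have "0 \<in> K" using assms(2) unfolding ideal_of_def lin_subspace_def by blast
  ultimately show ?thesis by blast
qed

lemma annihilator_eq_zero:
  assumes "semiprime_alg sc br" "subalg sc br L" "algebra_of_quotients sc br L"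
    and "essential_ideal sc br L I" "ideal_of sc br UNIV W" "I \<subseteq> W"
  shows "annihilator br W = {0}"
proof (rule algebra_of_quotients_ideal_eq_zero[OF assms(3) ideal_annihilator[OF assms(5)]])
  let ?K = "annihilator br W \<inter> L"
  have "ideal_of sc br L ?K"
    using assms(2) ideal_annihilator[OF assms(5)] by (rule ideal_of_Int_subalg)
  moreover have "I \<inter> ?K \<subseteq> {0}"
    using annihilator_Int_self[OF assms(1,5)] assms(6) by blast
  moreover have "0 \<in> I" "0 \<in> ?K"
    using assms(4) \<open>ideal_of sc br L ?K\<close>
    unfolding essential_ideal_def ideal_of_def lin_subspace_def by blast+
  ultimately show "?K = {0}"
    using assms(4) unfolding essential_ideal_def by blast
qed

lemma kills_products_br_right:
  assumes "Vector_Spaces.linear sc sc m" "kills_products br m w" "kills_products br (m \<circ> Rop br y) w"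
  shows "kills_products br m (br w y)"
  unfolding kills_products_def
proof
  fix u
  show "m (br (br w y) u) = 0 \<and> m (br u (br w y)) = 0"
    using assms(2,3) br_right_leibniz[of w y u] br_left_leibniz[of u w y]
    by (simp add: kills_products_def Rop_def linear_add[OF assms(1)])
qed

lemma kills_products_br_left:
  assumes "Vector_Spaces.linear sc sc m" "kills_products br m w" "kills_products br (m \<circ> Lop br y) w"
  shows "kills_products br m (br y w)"
  unfolding kills_products_def
proof
  fix u
  show "m (br (br y w) u) = 0 \<and> m (br u (br y w)) = 0"
    using assms(2,3) br_right_leibniz[of y w u] br_left_leibniz[of u y w]
    by (simp add: kills_products_def Lop_def linear_add[OF assms(1)])
qed

lemma kills_products_comp_Rop:
  assumes "Vector_Spaces.linear sc sc m" "kills_products br m w" "kills_products br m (br w y)"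
  shows "kills_products br (m \<circ> Rop br y) w"
  unfolding kills_products_def
proof
  fix u
  show "(m \<circ> Rop br y) (br w u) = 0 \<and> (m \<circ> Rop br y) (br u w) = 0"
    using assms(2,3) br_right_leibniz[of w u y] br_right_leibniz[of u w y]
    by (simp add: kills_products_def Rop_def linear_add[OF assms(1)])
qed

lemma kills_products_comp_Lop:
  assumes "Vector_Spaces.linear sc sc m" "kills_products br m w" "kills_products br m (br y w)"
  shows "kills_products br (m \<circ> Lop br y) w"
  unfolding kills_products_def
proof
  fix u
  show "(m \<circ> Lop br y) (br w u) = 0 \<and> (m \<circ> Lop br y) (br u w) = 0"
    using assms(2,3) br_left_leibniz[of y w u] br_left_leibniz[of y u w]
    by (simp add: kills_products_def Lop_def linear_add[OF assms(1)])
qed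

context
  fixes L :: "'a set" and \<Lambda> :: "('a \<Rightarrow> 'a) set"
  assumes subset_MQ: "\<Lambda> \<subseteq> MQ sc br"
    and comp_AQ: "\<And>m g. m \<in> \<Lambda> \<Longrightarrow> g \<in> AQ sc br L \<Longrightarrow> m \<circ> g \<in> \<Lambda>"
begin

lemma product_kernel_br_L:
  assumes "w \<in> product_kernel br \<Lambda>" "y \<in> L"
  shows "br w y \<in> product_kernel br \<Lambda>" "br y w \<in> product_kernel br \<Lambda>"
proof -
  have "kills_products br m (br w y) \<and> kills_products br m (br y w)" if "m \<in> \<Lambda>" for m
  proof -
    have "kills_products br m w" "kills_products br (m \<circ> Rop br y) w"
      "kills_products br (m \<circ> Lop br y) w"
      using assms that comp_AQ Rop_AQ Lop_AQ unfolding product_kernel_def by blast+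
    moreover have "Vector_Spaces.linear sc sc m"
      using that subset_MQ linear_MQ by blast
    ultimately show ?thesis
      using kills_products_br_right kills_products_br_left by blast
  qed
  then show "br w y \<in> product_kernel br \<Lambda>" "br y w \<in> product_kernel br \<Lambda>"
    unfolding product_kernel_def by blast+
qed

lemma product_kernel_br:
  assumes "dense_in sc br L" "w \<in> product_kernel br \<Lambda>"
  shows "br w q \<in> product_kernel br \<Lambda>" "br q w \<in> product_kernel br \<Lambda>"
proof -
  have "kills_products br m (br w q) \<and> kills_products br m (br q w)" if "m \<in> \<Lambda>" for m
  proof -
    have m: "m \<in> MQ sc br" "Vector_Spaces.linear sc sc m" "kills_products br m w"
      using that subset_MQ assms(2) linear_MQ unfolding product_kernel_def by auto
    have "kills_products br (m \<circ> Rop br y) w \<and> kills_products br (m \<circ> Lop br y) w" if "y \<in> L" for y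
      using m product_kernel_br_L[OF assms(2) that] \<open>m \<in> \<Lambda>\<close>
      unfolding product_kernel_def by (blast intro: kills_products_comp_Rop kills_products_comp_Lop)
    then have "(m \<circ> Lop br p) y = 0 \<and> (m \<circ> Rop br p) y = 0"
      if "p \<in> {br w q, br q w}" "y \<in> L" for p y
      using that by (auto simp: kills_products_def Lop_def Rop_def)
    then have "m \<circ> Lop br p = (\<lambda>_. 0) \<and> m \<circ> Rop br p = (\<lambda>_. 0)" if "p \<in> {br w q, br q w}" for p
      using assms(1) m(1) that unfolding dense_in_def by (blast intro: comp_MQ Lop_MQ Rop_MQ)
    then show ?thesis
      unfolding kills_products_def by (simp add: fun_eq_iff Lop_def Rop_def)
  qed
  then show "br w q \<in> product_kernel br \<Lambda>" "br q w \<in> product_kernel br \<Lambda>"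
    unfolding product_kernel_def by blast+
qed

lemma ideal_product_kernel:
  assumes "dense_in sc br L"
  shows "ideal_of sc br UNIV (product_kernel br \<Lambda>)"
proof -
  have lin: "Vector_Spaces.linear sc sc m" if "m \<in> \<Lambda>" for m
    using that subset_MQ linear_MQ by blast
  have "lin_subspace sc (product_kernel br \<Lambda>)"
    unfolding lin_subspace_def product_kernel_def kills_products_def
    by (auto simp: br_zero_left br_zero_right br_add_left br_add_right br_scale_left br_scale_right
        linear_0[OF lin] linear_add[OF lin] linear_scale[OF lin])
  then show ?thesis
    using product_kernel_br[OF assms] unfolding ideal_of_def by blast
qed

end

lemma kills_products_comp_MQ:
  assumes "ideal_of sc br UNIV W" "f \<in> MQ sc br" "j \<in> MQ sc br" "\<forall>w\<in>W. kills_products br j w"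
  shows "\<forall>w\<in>W. kills_products br (j \<circ> f) w"
  using assms(2-4)
proof (induction f arbitrary: j rule: MQ_induct)
  case id
  then show ?case by simp
next
  case (Rop q)
  have "br w q \<in> W" if "w \<in> W" for w
    using assms(1) that unfolding ideal_of_def by blast
  then show ?case
    using Rop.prems linear_MQ kills_products_comp_Rop by blast
next
  case (Lop q)
  have "br q w \<in> W" if "w \<in> W" for w
    using assms(1) that unfolding ideal_of_def by blast
  then show ?case
    using Lop.prems linear_MQ kills_products_comp_Lop by blast
next
  case zero
  then show ?case
    by (simp add: kills_products_def linear_0[OF linear_MQ])
next
  case (add f g)
  from add.IH(1)[OF add.prems] add.IH(2)[OF add.prems] show ?case
    by (simp add: kills_products_def linear_add[OF linear_MQ[OF add.prems(1)]])
next
  case (scale f c)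
  then show ?case
    by (simp add: kills_products_def linear_scale[OF linear_MQ])
next
  case (comp f g)
  then show ?case
    by (metis comp_MQ comp_assoc)
qed

lemma MQ_ideal_kills_products:
  assumes "ideal_of sc br UNIV W"
  shows "MQ_ideal sc br {j \<in> MQ sc br. \<forall>w\<in>W. kills_products br j w}"
  unfolding MQ_ideal_def
  using kills_products_comp_MQ[OF assms]
  by (auto simp: kills_products_def linear_0[OF linear_MQ]
      intro: zero_MQ add_MQ scale_MQ comp_MQ)

lemma MQ_ideal_Int_right_annihilator:
  assumes "MQ_ideal sc br K"
  shows "MQ_ideal sc br {j \<in> K. \<forall>k\<in>K. \<forall>u. k (j u) = 0}" (is "MQ_ideal sc br ?J")
proof (rule MQ_idealI)
  note K = MQ_idealD[OF assms]
  have lin: "Vector_Spaces.linear sc sc k" if "k \<in> K" for k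
    using K(1) that linear_MQ by blast
  show "?J \<subseteq> MQ sc br"
    using K(1) by blast
  have "k 0 = 0" if "k \<in> K" for k
    using lin[OF that] by (rule linear_0)
  then show "(\<lambda>_. 0) \<in> ?J"
    using K(2) by blast
  show "(\<lambda>u. f u + g u) \<in> ?J" if "f \<in> ?J" "g \<in> ?J" for f g
  proof (intro CollectI conjI ballI allI)
    show "(\<lambda>u. f u + g u) \<in> K"
      using that K(3) by blast
    fix k u assume "k \<in> K"
    with that have "k (f u) = 0" "k (g u) = 0"
      by simp_all
    then show "k (f u + g u) = 0"
      by (simp add: linear_add[OF lin[OF \<open>k \<in> K\<close>]])
  qed
  show "(\<lambda>u. sc c (f u)) \<in> ?J" if "f \<in> ?J" for c f
  proof (intro CollectI conjI ballI allI)
    show "(\<lambda>u. sc c (f u)) \<in> K"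
      using that K(4) by blast
    fix k u assume "k \<in> K"
    with that have "k (f u) = 0"
      by simp
    then show "k (sc c (f u)) = 0"
      by (simp add: linear_scale[OF lin[OF \<open>k \<in> K\<close>]])
  qed
  show "m \<circ> f \<in> ?J \<and> f \<circ> m \<in> ?J" if "m \<in> MQ sc br" "f \<in> ?J" for m f
  proof -
    have "k (m (f u)) = 0" "k (f (m u)) = 0" if "k \<in> K" for k u
    proof -
      have "k \<circ> m \<in> K"
        using K(5) \<open>m \<in> MQ sc br\<close> that by blast
      moreover have "\<forall>k'\<in>K. \<forall>u. k' (f u) = 0"
        using \<open>f \<in> ?J\<close> by simp
      ultimately have "(k \<circ> m) (f u) = 0"
        by blast
      then show "k (m (f u)) = 0" by simp
      show "k (f (m u)) = 0"
        using \<open>f \<in> ?J\<close> that by simp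
    qed
    moreover have "m \<circ> f \<in> K" "f \<circ> m \<in> K"
      using that K(5) by blast+
    ultimately show ?thesis
      by simp
  qed
qed

lemma semiprime_MQ_right_annihilator_eq_zero:
  assumes "semiprime_MQ sc br" "MQ_ideal sc br K" "j \<in> K" "\<And>k u. k \<in> K \<Longrightarrow> k (j u) = 0"
  shows "j = (\<lambda>_. 0)"
proof -
  have "{j \<in> K. \<forall>k\<in>K. \<forall>u. k (j u) = 0} = {\<lambda>_. 0}"
    using assms(1) MQ_ideal_Int_right_annihilator[OF assms(2)]
    by (rule semiprime_MQD) (auto simp: fun_eq_iff)
  then show ?thesis
    using assms(3,4) by blast
qed

lemma kills_products_range_annihilator:
  assumes "semiprime_MQ sc br" "ideal_of sc br UNIV W"
    and "m \<in> MQ sc br" "\<forall>w\<in>W. kills_products br m w"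
  shows "m q \<in> annihilator br W"
proof -
  let ?K = "{j \<in> MQ sc br. \<forall>w\<in>W. kills_products br j w}"
  have "p \<circ> m = (\<lambda>_. 0)" if "w \<in> W" "p \<in> {Lop br w, Rop br w}" for w p
  proof (rule semiprime_MQ_right_annihilator_eq_zero[OF assms(1) MQ_ideal_kills_products[OF assms(2)]])
    have "p \<circ> m \<in> MQ sc br"
      using that(2) assms(3) Lop_MQ Rop_MQ by (blast intro: comp_MQ)
    moreover have "\<forall>w\<in>W. kills_products br (p \<circ> m) w"
      using that(2) assms(4)
      by (auto simp: kills_products_def Lop_def Rop_def br_zero_left br_zero_right)
    ultimately show "p \<circ> m \<in> ?K" by blast
    show "k ((p \<circ> m) u) = 0" if "k \<in> ?K" for k u
      using that \<open>w \<in> W\<close> \<open>p \<in> {Lop br w, Rop br w}\<close>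
      by (auto simp: kills_products_def Lop_def Rop_def)
  qed
  then have "(Lop br w \<circ> m) q = 0" "(Rop br w \<circ> m) q = 0" if "w \<in> W" for w
    using that by simp_all
  then show ?thesis
    unfolding annihilator_def by (simp add: Lop_def Rop_def)
qed

end

lemma lan_tilde_ideal_comp:
  assumes "\<mu> \<in> lan (MQ sc br) (tilde_ideal sc br L I)" "g \<in> AQ sc br L"
  shows "\<mu> \<circ> g \<in> lan (MQ sc br) (tilde_ideal sc br L I)"
proof -
  have "g \<circ> \<nu> \<in> tilde_ideal sc br L I" if "\<nu> \<in> tilde_ideal sc br L I" for \<nu>
    using assms(2) that unfolding tilde_ideal_def by (rule gen_ideal.lmul)
  moreover have "\<mu> \<circ> g \<in> MQ sc br"
    using assms AQ_subset_MQ unfolding lan_def by (blast intro: comp_MQ)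
  ultimately show ?thesis
    using assms(1) unfolding lan_def by (simp add: comp_assoc)
qed

lemma subset_product_kernel_lan_tilde_ideal:
  "I \<subseteq> product_kernel br (lan A (tilde_ideal sc br L I))"
proof
  fix x assume "x \<in> I"
  then have "Lop br x \<in> tilde_ideal sc br L I" "Rop br x \<in> tilde_ideal sc br L I"
    unfolding tilde_ideal_def by (auto intro: gen_ideal.gen Lop_AQ Rop_AQ)
  then have "m (br x u) = 0 \<and> m (br u x) = 0" if "m \<in> lan A (tilde_ideal sc br L I)" for m u
    using that unfolding lan_def by (force simp: Lop_def Rop_def dest: fun_cong[of _ _ u])
  then show "x \<in> product_kernel br (lan A (tilde_ideal sc br L I))"
    unfolding product_kernel_def kills_products_def by blast
qed

theorem corollary6p7:
  fixes sc :: "'k::field \<Rightarrow> 'a::ab_group_add \<Rightarrow> 'a"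
    and br :: "'a \<Rightarrow> 'a \<Rightarrow> 'a"
    and L I :: "'a set"
  assumes "symmetric_leibniz sc br"
    and "subalg sc br L"
    and "dense_in sc br L"
    and "mult_semiprime sc br"
    and "algebra_of_quotients sc br L"
    and "essential_ideal sc br L I"
  shows "lan (AQ sc br UNIV) (tilde_ideal sc br L I) = {\<lambda>_. 0}"
proof -
  interpret symmetric_leibniz_algebra sc br by (rule symmetric_leibniz_algebra.intro) fact
  define \<Lambda> where "\<Lambda> = lan (MQ sc br) (tilde_ideal sc br L I)"
  define W where "W = product_kernel br \<Lambda>"
  have "\<Lambda> \<subseteq> MQ sc br" unfolding \<Lambda>_def lan_def by blast
  then have W_ideal: "ideal_of sc br UNIV W"
    unfolding W_def \<Lambda>_def using lan_tilde_ideal_comp assms(3) by (rule ideal_product_kernel)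
  moreover have "I \<subseteq> W"
    unfolding W_def \<Lambda>_def by (rule subset_product_kernel_lan_tilde_ideal)
  ultimately have "annihilator br W = {0}"
    using assms(2-6) annihilator_eq_zero unfolding mult_semiprime_def by blast
  have "m = (\<lambda>_. 0)" if "m \<in> \<Lambda>" for m
  proof -
    have "\<forall>w\<in>W. kills_products br m w"
      using that unfolding W_def product_kernel_def by blast
    then have "m q \<in> annihilator br W" for q
      using assms(4) W_ideal \<open>\<Lambda> \<subseteq> MQ sc br\<close> that unfolding mult_semiprime_def
      by (blast intro: kills_products_range_annihilator)
    then show ?thesis
      using \<open>annihilator br W = {0}\<close> by blast
  qed
  moreover have "lan (AQ sc br UNIV) (tilde_ideal sc br L I) \<subseteq> \<Lambda>"
    unfolding \<Lambda>_def lan_def using AQ_subset_MQ by blast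
  moreover have "(\<lambda>_. 0) \<in> lan (AQ sc br UNIV) (tilde_ideal sc br L I)"
    unfolding lan_def AQ_def by (auto intro: gen_alg.zero)
  ultimately show ?thesis by blast
qed

end
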